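(* Let $k\in\frac12+\mathbb Z$ with $k>\frac52$, $N\in4\mathbb N$, and $f\in S_k(\Gamma_0^*(N))$. For real $x>0$ put $\psi(x):=\int_0^{i\infty}f(w)(w-x)^{k-2}\,dw$. Let $P_{k-2}$ be the polynomial $$P_{k-2}(z)=i^{k-1}\sum_{n=0}^{k-5/2}\left[\binom{k-2}{n}N^n\Lambda_f(k-1-n)+\binom{k-2}{n+\frac12}N^{k-n-\frac{11}{4}}\,i^{2n-k+\frac12}\,\Lambda_f\!\left(k-\tfrac32-n\right)\right]z^n.$$ Then there is a constant $C$ such that for all $x>1$, $$\left|P_{k-2}(ix)-\psi(Nx)+i^{1-2k}\,\psi(1/x)\,(\sqrt N x)^{k-\frac52}\right|\le C\,x^{k-\frac32}.$$
   Context: All complex powers use the principal branch of the logarithm ($-\pi<\arg\le\pi$), so $i^t=e^{i\pi t/2}$ for real $t$; $\binom{z}{w}:=\frac{\Gamma(z+1)}{\Gamma(w+1)\Gamma(z-w+1)}$. For odd $d$, $\epsilon_d=1$ if $d\equiv 1\pmod 4$, $\epsilon_d=i$ if $d\equiv3\pmod4$. For $\gamma=\begin{pmatrix}*&*\\c&d\end{pmatrix}\in\Gamma_0(N)$, $(f|_k\gamma)(z)=\left(\frac cd\right)\epsilon_d^{2k}(cz+d)^{-k}f(\gamma z)$ (Kronecker symbol), and $(f|_kW_N)(z)=(-i\sqrt Nz)^{-k}f(-1/(Nz))$. $S_k(\Gamma_0^*(N))$ is the space of holomorphic cusp forms $f$ with $f|_k\gamma=f$ for all $\gamma\in\Gamma_0(N)$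 and $f|_kW_N=f$. $\Lambda_f(s)=\int_0^\infty f(it)t^{s-1}dt$ (entire continuation). ($P_{k-2}$ is the polynomial $P_a$ of Theorem 3.1 for $a=k-2$, i.e. $\int_0^{i\infty}f(w)\Phi_{k-2}(z,w)dw$.) *)

theory Defs
  imports "HOL-Analysis.Analysis" "HOL-Number_Theory.Number_Theory"
begin

definition uhp :: "complex set" where
  "uhp = {z. Im z > 0}"

definition kron_prime :: "int \<Rightarrow> int \<Rightarrow> int" where
  "kron_prime a p = (if p = 2 then (if even a then 0 else if a mod 8 = 1 \<or> a mod 8 = 7 then 1 else -1)
                     else Legendre a p)"

definition kronecker :: "int \<Rightarrow> int \<Rightarrow> int" where
  "kronecker a n =
     (if n = 0 then (if \<bar>a\<bar> = 1 then 1 else 0)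
      else (if n < 0 \<and> a < 0 then -1 else 1) *
           prod_mset (image_mset (\<lambda>p. kron_prime a (int p)) (prime_factorization (nat \<bar>n\<bar>))))"

definition eps_d :: "int \<Rightarrow> complex" where
  "eps_d d = (if d mod 4 = 1 then 1 else \<i>)"

definition Gamma0 :: "nat \<Rightarrow> (int \<times> int \<times> int \<times> int) set" where
  "Gamma0 N = {(a,b,c,d). a*d - b*c = 1 \<and> int N dvd c}"

definition SL2Z :: "(int \<times> int \<times> int \<times> int) set" where
  "SL2Z = {(a,b,c,d). a*d - b*c = 1}"

definition moebius_act :: "int \<times> int \<times> int \<times> int \<Rightarrow> complex \<Rightarrow> complex" where
  "moebius_act g z = (case g of (a,b,c,d) \<Rightarrow> (of_int a * z + of_int b) / (of_int c * z + of_int d))"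

definition slash :: "real \<Rightarrow> (complex \<Rightarrow> complex) \<Rightarrow> int \<times> int \<times> int \<times> int \<Rightarrow> complex \<Rightarrow> complex" where
  "slash k f g z = (case g of (a,b,c,d) \<Rightarrow>
      of_int (kronecker c d) * eps_d d powr (2 * complex_of_real k)
      * (of_int c * z + of_int d) powr (- complex_of_real k) * f (moebius_act g z))"

definition slash_W :: "real \<Rightarrow> nat \<Rightarrow> (complex \<Rightarrow> complex) \<Rightarrow> complex \<Rightarrow> complex" where
  "slash_W k N f z = (- \<i> * of_real (sqrt (real N)) * z) powr (- complex_of_real k) * f (- 1 / (of_nat N * z))"

definition vanishes_at_cusps :: "real \<Rightarrow> (complex \<Rightarrow> complex) \<Rightarrow> bool" where
  "vanishes_at_cusps k f \<longleftrightarrow>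
     (\<forall>g\<in>SL2Z. case g of (a,b,c,d) \<Rightarrow>
        (\<forall>e>0. \<exists>Y. \<forall>z. Im z > Y \<longrightarrow>
           cmod ((of_int c * z + of_int d) powr (- complex_of_real k) * f (moebius_act g z)) < e))"

definition cusp_forms_star :: "real \<Rightarrow> nat \<Rightarrow> (complex \<Rightarrow> complex) set" where
  "cusp_forms_star k N = {f. f holomorphic_on uhp
       \<and> (\<forall>g\<in>Gamma0 N. \<forall>z\<in>uhp. slash k f g z = f z)
       \<and> (\<forall>z\<in>uhp. slash_W k N f z = f z)
       \<and> vanishes_at_cusps k f}"

definition Lambda :: "(complex \<Rightarrow> complex) \<Rightarrow> complex \<Rightarrow> complex" where
  "Lambda f s = integral {0<..} (\<lambda>t::real. f (\<i> * of_real t) * of_real t powr (s - 1))"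

text \<open>psi(x) = int_0^{i infty} f(w) (w-x)^(k-2) dw, along w = i t.\<close>
definition psi :: "real \<Rightarrow> (complex \<Rightarrow> complex) \<Rightarrow> real \<Rightarrow> complex" where
  "psi k f x = \<i> * integral {0<..} (\<lambda>t::real. f (\<i> * of_real t) * (\<i> * of_real t - of_real x) powr (complex_of_real (k - 2)))"

definition gbinom :: "real \<Rightarrow> real \<Rightarrow> real" where
  "gbinom z w = Gamma (z + 1) / (Gamma (w + 1) * Gamma (z - w + 1))"

definition P_poly :: "real \<Rightarrow> nat \<Rightarrow> (complex \<Rightarrow> complex) \<Rightarrow> complex \<Rightarrow> complex" where
  "P_poly k N f z = \<i> powr (complex_of_real (k - 1)) *
     (\<Sum>n = 0..nat \<lfloor>k - 5/2\<rfloor>.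
        (of_real (gbinom (k - 2) (real n) * real N ^ n) * Lambda f (of_real (k - 1 - real n))
         + of_real (gbinom (k - 2) (real n + 1/2) * real N powr (k - real n - 11/4))
           * \<i> powr (complex_of_real (2 * real n - k + 1/2)) * Lambda f (of_real (k - 3/2 - real n)))
        * z ^ n)"

end

theory Submission
  imports Defs "HOL-Complex_Analysis.Complex_Analysis" "HOL-Real_Asymp.Real_Asymp"
begin

(*
  Each of the three terms is separately O(x^(k-3/2)).  P_(k-2) has degree at most k - 5/2.  For psi, the point is that
  f decays exponentially along the imaginary axis at both ends: at i\<infinity> because f, as a
  function of q = e^(2\<pi>iz), is holomorphic on the unit disc and vanishes at q = 0, so the
  Schwarz lemma gives |f z| \<le> C e^(-2\<pi> Im z); at 0 via the Fricke involution.  Hence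
  psi(y) = O((1 + y)^(k-2)).
*)

lemma periodic_plus_of_int:
  assumes per: "\<And>z. Im z > 0 \<Longrightarrow> f (z + 1) = f z" and z: "Im z > 0"
  shows "f (z + of_int n) = f z"
proof (induction n rule: int_induct[where k = 0])
  case (step1 n)
  then show ?case using per[of "z + of_int n"] z by (simp add: add.assoc)
next
  case (step2 n)
  then show ?case using per[of "z + of_int (n - 1)"] z by (simp add: algebra_simps)
qed simp

lemma periodic_eq_if_exp_eq:
  assumes per: "\<And>z. Im z > 0 \<Longrightarrow> f (z + 1) = f z"
    and "Im w > 0" "Im z > 0" and "exp (2 * of_real pi * \<i> * w) = exp (2 * of_real pi * \<i> * z)"
  shows "f w = f z"
proof -
  obtain n :: int where "2 * of_real pi * \<i> * w = 2 * of_real pi * \<i> * z + of_int (2 * n) * pi * \<i>"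
    using exp_eq assms(4) by blast
  then have "2 * of_real pi * \<i> * w = 2 * of_real pi * \<i> * (z + of_int n)"
    by (simp add: algebra_simps)
  then have "w = z + of_int n" by simp
  then show ?thesis using periodic_plus_of_int[of f, OF per \<open>Im z > 0\<close>] by simp
qed

lemma Im_div_2pi_i: "Im (w / (2 * of_real pi * \<i>)) = - Re w / (2 * pi)"
proof -
  have "w / (2 * of_real pi * \<i>) = - \<i> * w / of_real (2 * pi)" by (simp add: field_simps)
  then show ?thesis by (simp only: Im_divide_of_real) simp
qed

lemma Im_Ln_div_2pi_i_gt:
  assumes "q \<noteq> 0" "cmod q < exp (- 2 * pi * Y)"
  shows "Im (Ln q / (2 * of_real pi * \<i>)) > Y"
proof -
  have "ln (cmod q) < - 2 * pi * Y"
    using assms by (metis ln_exp ln_less_cancel_iff exp_gt_zero zero_less_norm_iff)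
  then have "Y < - ln (cmod q) / (2 * pi)" by (simp add: field_simps)
  then show ?thesis unfolding Im_div_2pi_i Re_Ln[OF assms(1)] .
qed

definition q_pullback :: "(complex \<Rightarrow> complex) \<Rightarrow> complex \<Rightarrow> complex" where
  "q_pullback f q = (if q = 0 then 0 else f (Ln q / (2 * of_real pi * \<i>)))"

lemma q_pullback_exp:
  assumes per: "\<And>z. Im z > 0 \<Longrightarrow> f (z + 1) = f z" and z: "Im z > 0"
  shows "q_pullback f (exp (2 * of_real pi * \<i> * z)) = f z"
proof -
  define q where "q = exp (2 * of_real pi * \<i> * z)"
  have "q \<noteq> 0" "cmod q < exp (- 2 * pi * 0)"
    using z by (auto simp: q_def)
  then have "Im (Ln q / (2 * of_real pi * \<i>)) > 0" by (rule Im_Ln_div_2pi_i_gt)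
  moreover have "exp (2 * of_real pi * \<i> * (Ln q / (2 * of_real pi * \<i>))) = q"
    using \<open>q \<noteq> 0\<close> by simp
  ultimately have "f (Ln q / (2 * of_real pi * \<i>)) = f z"
    using periodic_eq_if_exp_eq[of f, OF per _ z] unfolding q_def by blast
  with \<open>q \<noteq> 0\<close> show ?thesis by (simp add: q_pullback_def q_def)
qed

lemma holomorphic_q_pullback_punctured:
  assumes hol: "f holomorphic_on uhp" and per: "\<And>z. Im z > 0 \<Longrightarrow> f (z + 1) = f z"
  shows "q_pullback f holomorphic_on ball 0 1 - {0}"
proof -
  have "q_pullback f field_differentiable at p" if p: "p \<in> ball 0 1 - {0}" for p
  proof -
    define u where "u = sgn p"
    define S where "S = ball 0 1 - (\<lambda>q. q / u) -` \<real>\<^sub>\<le>\<^sub>0"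
    define L where "L q = (Ln (q / u) + Ln u) / (2 * of_real pi * \<i>)" for q
    have u: "u \<noteq> 0" "cmod u = 1" using p by (auto simp: u_def norm_sgn sgn_eq_0_iff)
    have "open S" unfolding S_def
      by (intro open_Diff continuous_closed_vimage closed_nonpos_Reals_complex)
        (use u in \<open>auto intro!: continuous_intros\<close>)
    have "p / u = of_real (cmod p)" using p by (simp add: u_def Complex.sgn_eq)
    then have "p \<in> S" using p by (auto simp: S_def complex_nonpos_Reals_iff)
    have S: "q \<noteq> 0" "cmod q < 1" "q / u \<notin> \<real>\<^sub>\<le>\<^sub>0" if "q \<in> S" for q
      using that by (auto simp: S_def)
    \<comment> \<open>\<open>Ln\<close> jumps on the negative axis; rotating by \<open>u\<close> moves the cut away from \<open>p\<close>,
      and \<open>L\<close> still agrees with \<open>Ln q / (2\<pi>i)\<close> modulo \<open>1\<close>.\<close>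
    have ImL: "Im (L q) > 0" if "q \<in> S" for q
      using S[OF that] u by (simp add: L_def Im_div_2pi_i norm_divide divide_neg_pos)
    have "(f \<circ> L) holomorphic_on S"
    proof (rule holomorphic_on_compose_gen[OF _ hol])
      show "L holomorphic_on S" unfolding L_def using S by (intro holomorphic_intros) auto
      show "L ` S \<subseteq> uhp" using ImL by (auto simp: uhp_def)
    qed
    moreover have "(f \<circ> L) q = q_pullback f q" if "q \<in> S" for q
    proof -
      have "exp (2 * of_real pi * \<i> * L q) = exp (2 * of_real pi * \<i> * (Ln q / (2 * of_real pi * \<i>)))"
        using S[OF that] u by (simp add: L_def exp_add)
      moreover have "Im (Ln q / (2 * of_real pi * \<i>)) > 0"
        using S[OF that] by (intro Im_Ln_div_2pi_i_gt) auto
      ultimately have "f (L q) = f (Ln q / (2 * of_real pi * \<i>))"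
        using periodic_eq_if_exp_eq[of f, OF per ImL[OF that]] by blast
      then show ?thesis using S[OF that] by (simp add: q_pullback_def)
    qed
    ultimately have "q_pullback f holomorphic_on S" by (rule holomorphic_transform)
    then show ?thesis using \<open>open S\<close> \<open>p \<in> S\<close> holomorphic_on_imp_differentiable_at by blast
  qed
  then show ?thesis by (simp add: holomorphic_on_def field_differentiable_at_within)
qed

lemma q_pullback_tendsto_0:
  assumes vanish: "\<And>e. e > 0 \<Longrightarrow> \<exists>Y. \<forall>z. Im z > Y \<longrightarrow> cmod (f z) < e"
  shows "q_pullback f \<midarrow>0\<rightarrow> 0"
  unfolding LIM_eq
proof (intro allI impI)
  fix e :: real assume "e > 0"
  then obtain Y where Y: "\<And>z. Im z > Y \<Longrightarrow> cmod (f z) < e" using vanish by blast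
  have "cmod (q_pullback f q) < e" if "q \<noteq> 0" "cmod q < exp (- 2 * pi * Y)" for q
    using Y[OF Im_Ln_div_2pi_i_gt[OF that]] that(1) by (simp add: q_pullback_def)
  then show "\<exists>s>0. \<forall>q. q \<noteq> 0 \<and> norm (q - 0) < s \<longrightarrow> norm (q_pullback f q - 0) < e"
    by (intro exI[of _ "exp (- 2 * pi * Y)"]) auto
qed

lemma holomorphic_q_pullback:
  assumes hol: "f holomorphic_on uhp" and per: "\<And>z. Im z > 0 \<Longrightarrow> f (z + 1) = f z"
    and vanish: "\<And>e. e > 0 \<Longrightarrow> \<exists>Y. \<forall>z. Im z > Y \<longrightarrow> cmod (f z) < e"
  shows "q_pullback f holomorphic_on ball 0 1"
proof (rule no_isolated_singularity')
  have "q_pullback f \<midarrow>0\<rightarrow> 0" using vanish by (rule q_pullback_tendsto_0)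
  then have "(q_pullback f \<longlongrightarrow> 0) (at 0 within ball 0 1)"
    by (rule tendsto_within_subset) (rule subset_UNIV)
  then show "(q_pullback f \<longlongrightarrow> q_pullback f z) (at z within ball 0 1)" if "z \<in> {0}" for z
    using that by (simp add: q_pullback_def)
  show "q_pullback f holomorphic_on ball 0 1 - {0}"
    using hol per by (rule holomorphic_q_pullback_punctured)
qed auto

lemma Schwarz_Lemma_ball:
  assumes hol: "g holomorphic_on ball 0 r" and "g 0 = 0"
    and bound: "\<And>q. cmod q < r \<Longrightarrow> cmod (g q) < 1" and q: "cmod q < r"
  shows "cmod (g q) \<le> cmod q / r"
proof -
  have r: "r > 0" using q norm_ge_zero[of q] by linarith
  define h where "h w = g (of_real r * w)" for w
  have "(\<lambda>w::complex. of_real r * w) ` ball 0 1 \<subseteq> ball 0 r"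
    using r by (auto simp: norm_mult)
  then have "h holomorphic_on ball 0 1"
    unfolding h_def by (intro holomorphic_on_compose_gen[OF _ hol, unfolded o_def] holomorphic_intros)
  moreover have "h 0 = 0" using \<open>g 0 = 0\<close> by (simp add: h_def)
  moreover have "cmod (h w) < 1" if "cmod w < 1" for w
    unfolding h_def using r that by (intro bound) (simp add: norm_mult)
  moreover have "cmod (q / of_real r) < 1" using q r by (simp add: norm_divide)
  ultimately have "cmod (h (q / of_real r)) \<le> cmod (q / of_real r)" by (rule Schwarz_Lemma(1))
  then show ?thesis using r by (simp add: h_def norm_divide)
qed

lemma periodic_vanishing_exp_decay:
  assumes hol: "f holomorphic_on uhp" and per: "\<And>z. Im z > 0 \<Longrightarrow> f (z + 1) = f z"
    and vanish: "\<And>e. e > 0 \<Longrightarrow> \<exists>Y. \<forall>z. Im z > Y \<longrightarrow> cmod (f z) < e"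
  shows "\<exists>C Y. \<forall>z. Im z > Y \<longrightarrow> cmod (f z) \<le> C * exp (- 2 * pi * Im z)"
proof -
  obtain Y1 where Y1: "\<And>z. Im z > Y1 \<Longrightarrow> cmod (f z) < 1" using vanish[of 1] by auto
  define Y where "Y = max Y1 0"
  define r where "r = exp (- 2 * pi * Y)"
  have "r \<le> 1" by (simp add: r_def Y_def)
  have "q_pullback f holomorphic_on ball 0 1"
    using hol per vanish by (rule holomorphic_q_pullback)
  then have hol_r: "q_pullback f holomorphic_on ball 0 r"
    by (rule holomorphic_on_subset) (use \<open>r \<le> 1\<close> in auto)
  have q_pullback_0: "q_pullback f 0 = 0" by (simp add: q_pullback_def)
  have bound: "cmod (q_pullback f q) < 1" if "cmod q < r" for q
  proof (cases "q = 0")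
    case False
    have "r \<le> exp (- 2 * pi * Y1)" by (simp add: r_def Y_def)
    then have "cmod q < exp (- 2 * pi * Y1)" using that by linarith
    with False show ?thesis using Y1 Im_Ln_div_2pi_i_gt by (simp add: q_pullback_def)
  qed (simp add: q_pullback_def)
  have "cmod (f z) \<le> 1 / r * exp (- 2 * pi * Im z)" if "Im z > Y" for z
  proof -
    have "Im z > 0" using that by (simp add: Y_def)
    have small: "cmod (exp (2 * of_real pi * \<i> * z)) < r"
      using that by (simp add: r_def)
    have "cmod (q_pullback f (exp (2 * of_real pi * \<i> * z))) \<le> cmod (exp (2 * of_real pi * \<i> * z)) / r"
      by (rule Schwarz_Lemma_ball[OF hol_r q_pullback_0 bound small])
    then show ?thesis
      using q_pullback_exp[of f z] per \<open>Im z > 0\<close> by simp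
  qed
  then show ?thesis by blast
qed

lemma bounded_above_on_pos_reals:
  fixes g :: "real \<Rightarrow> real"
  assumes cont: "continuous_on {0<..} g" and "a > 0"
    and near_0: "\<And>t. 0 < t \<Longrightarrow> t \<le> a \<Longrightarrow> g t \<le> M"
    and near_top: "\<And>t. t \<ge> b \<Longrightarrow> g t \<le> M'"
  shows "\<exists>B. \<forall>t>0. g t \<le> B"
proof -
  have "compact (g ` {a..b})"
    using \<open>a > 0\<close> by (intro compact_continuous_image continuous_on_subset[OF cont]) auto
  then obtain M'' where "\<forall>x\<in>g ` {a..b}. norm x \<le> M''"
    using compact_imp_bounded bounded_iff by blast
  then have M'': "g t \<le> M''" if "t \<in> {a..b}" for t
    using that abs_le_D1 by fastforce
  have "g t \<le> max M (max M' M'')" if "t > 0" for t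
  proof -
    consider "t \<le> a" | "t \<ge> b" | "t \<in> {a..b}" by fastforce
    then show ?thesis
      using near_0[OF that] near_top[of t] M''[of t] by cases auto
  qed
  then show ?thesis by blast
qed

lemma has_integral_exp_minus_pos_reals: "((\<lambda>t::real. exp (- t)) has_integral 1) {0<..}"
proof -
  have "((\<lambda>t::real. exp (- 1 * t)) has_integral exp (- 1 * 0) / 1) {0..}"
    by (rule has_integral_exp_minus_to_infinity) simp
  then have "((\<lambda>t::real. exp (- t)) has_integral 1) {0..}" by simp
  moreover have "negligible {t \<in> {0..} - {0<..}. exp (- t) \<noteq> (0::real)}"
    by (rule negligible_subset[of "{0}"]) auto
  moreover have "negligible {t \<in> {0<..} - {0..}. exp (- t) \<noteq> (0::real)}"
    by (rule negligible_subset[of "{}"]) auto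
  ultimately show ?thesis using has_integral_spike_set_eq[of "{0..}" "{0<..}" "\<lambda>t. exp (- t)"] by blast
qed

lemma norm_psi_le:
  assumes B: "\<And>t. t > 0 \<Longrightarrow> cmod (f (\<i> * of_real t)) * (1 + t) powr k * exp t \<le> B"
    and k: "k \<ge> 2" and y: "y \<ge> 0"
  shows "cmod (psi k f y) \<le> B * (1 + y) powr (k - 2)"
proof -
  define g where
    "g = (\<lambda>t::real. f (\<i> * of_real t) * (\<i> * of_real t - of_real y) powr complex_of_real (k - 2))"
  have psi_eq: "psi k f y = \<i> * integral {0<..} g" by (simp add: psi_def g_def)
  have "0 \<le> cmod (f (\<i> * of_real 1)) * (1 + 1) powr k * exp 1" by simp
  then have "B \<ge> 0" using B[of 1] by linarith
  have bound: "norm (g t) \<le> B * (1 + y) powr (k - 2) * exp (- t)" if t: "t > 0" for t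
  proof -
    have "cmod (\<i> * of_real t - of_real y) \<le> t + y"
      using norm_triangle_ineq4[of "\<i> * of_real t" "of_real y"] t y by (simp add: norm_mult)
    also have "\<dots> \<le> (1 + t) * (1 + y)" using t y by (simp add: algebra_simps)
    finally have "cmod (\<i> * of_real t - of_real y) powr (k - 2) \<le> ((1 + t) * (1 + y)) powr (k - 2)"
      using k by (intro powr_mono2) auto
    also have "\<dots> \<le> (1 + t) powr k * (1 + y) powr (k - 2)"
      using t y by (simp add: powr_mult powr_mono mult_right_mono)
    finally have "norm (g t) \<le> cmod (f (\<i> * of_real t)) * ((1 + t) powr k * (1 + y) powr (k - 2))"
      by (simp add: g_def norm_mult norm_powr_real_powr' mult_left_mono)
    also have "\<dots> = (cmod (f (\<i> * of_real t)) * (1 + t) powr k * exp t) * ((1 + y) powr (k - 2) * exp (- t))"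
      by (simp add: exp_minus field_simps)
    also have "\<dots> \<le> B * ((1 + y) powr (k - 2) * exp (- t))"
      using B[OF t] by (intro mult_right_mono) auto
    finally show ?thesis by (simp add: mult.assoc)
  qed
  have "cmod (integral {0<..} g) \<le> B * (1 + y) powr (k - 2)"
  proof (cases "g integrable_on {0<..}")
    case True
    have int: "((\<lambda>t. B * (1 + y) powr (k - 2) * exp (- t)) has_integral B * (1 + y) powr (k - 2) * 1) {0<..}"
      by (rule has_integral_mult_right[OF has_integral_exp_minus_pos_reals])
    have "cmod (integral {0<..} g) \<le> integral {0<..} (\<lambda>t. B * (1 + y) powr (k - 2) * exp (- t))"
      by (rule integral_norm_bound_integral[OF True]) (use int bound in auto)
    also have "\<dots> = B * (1 + y) powr (k - 2)" using integral_unique[OF int] by (simp only: mult_1_right)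
    finally show ?thesis .
  qed (use \<open>B \<ge> 0\<close> in \<open>simp add: not_integrable_integral\<close>)
  then show ?thesis by (simp add: psi_eq norm_mult)
qed

lemma norm_sum_powers_le:
  fixes a :: "nat \<Rightarrow> complex"
  assumes deg: "\<And>n. n \<le> m \<Longrightarrow> real n \<le> e" and z: "cmod z \<ge> 1"
  shows "cmod (\<Sum>n = 0..m. a n * z ^ n) \<le> (\<Sum>n = 0..m. cmod (a n)) * cmod z powr e"
proof -
  have "cmod (\<Sum>n = 0..m. a n * z ^ n) \<le> (\<Sum>n = 0..m. cmod (a n) * cmod z ^ n)"
    by (rule order_trans[OF norm_sum]) (simp add: norm_mult norm_power)
  also have "\<dots> \<le> (\<Sum>n = 0..m. cmod (a n) * cmod z powr e)"
  proof (rule sum_mono)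
    fix n assume "n \<in> {0..m}"
    have "cmod z ^ n = cmod z powr real n" using z by (subst powr_realpow) auto
    also have "\<dots> \<le> cmod z powr e" using deg \<open>n \<in> {0..m}\<close> z by (intro powr_mono) auto
    finally show "cmod (a n) * cmod z ^ n \<le> cmod (a n) * cmod z powr e"
      by (rule mult_left_mono) simp
  qed
  finally show ?thesis by (simp add: sum_distrib_right)
qed

lemma psi_dilation_bound:
  assumes B: "\<And>y. y \<ge> 0 \<Longrightarrow> cmod (psi k f y) \<le> B * (1 + y) powr (k - 2)"
    and "B \<ge> 0" "k \<ge> 2" "a \<ge> 0" "x \<ge> 1"
  shows "cmod (psi k f (a * x)) \<le> B * (1 + a) powr (k - 2) * x powr (k - 2)"
proof -
  have "cmod (psi k f (a * x)) \<le> B * (1 + a * x) powr (k - 2)"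
    using assms by (intro B) simp
  also have "\<dots> \<le> B * ((1 + a) * x) powr (k - 2)"
    using assms by (intro mult_left_mono powr_mono2) (auto simp: algebra_simps)
  finally show ?thesis using assms by (simp add: powr_mult mult.assoc)
qed

lemma psi_inverse_bound:
  assumes B: "\<And>y. y \<ge> 0 \<Longrightarrow> cmod (psi k f y) \<le> B * (1 + y) powr (k - 2)"
    and "B \<ge> 0" "k \<ge> 2" "x \<ge> 1"
  shows "cmod (psi k f (1 / x)) \<le> B * 2 powr (k - 2)"
proof -
  have "cmod (psi k f (1 / x)) \<le> B * (1 + 1 / x) powr (k - 2)"
    using assms by (intro B) simp
  also have "\<dots> \<le> B * 2 powr (k - 2)"
    using assms by (intro mult_left_mono powr_mono2) auto
  finally show ?thesis .
qed

lemma psi_terms_bound: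
  assumes B: "\<And>y. y \<ge> 0 \<Longrightarrow> cmod (psi k f y) \<le> B * (1 + y) powr (k - 2)"
    and "B \<ge> 0" "k \<ge> 2"
  shows "\<exists>C. \<forall>x\<ge>1. cmod (psi k f (real N * x))
      + cmod (\<i> powr (complex_of_real (1 - 2 * k)) * psi k f (1 / x)
          * of_real ((sqrt (real N) * x) powr (k - 5/2))) \<le> C * x powr (k - 3/2)"
proof -
  define c where "c = cmod (\<i> powr (complex_of_real (1 - 2 * k)))"
  define C where "C = B * (1 + real N) powr (k - 2) + c * B * 2 powr (k - 2) * sqrt (real N) powr (k - 5/2)"
  have "cmod (psi k f (real N * x))
      + cmod (\<i> powr (complex_of_real (1 - 2 * k)) * psi k f (1 / x)
          * of_real ((sqrt (real N) * x) powr (k - 5/2))) \<le> C * x powr (k - 3/2)" if x: "x \<ge> 1" for x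
  proof -
    have x_powr: "x powr (k - 2) \<le> x powr (k - 3/2)" "x powr (k - 5/2) \<le> x powr (k - 3/2)"
      using x by (auto intro: powr_mono)
    have "cmod (psi k f (real N * x)) \<le> B * (1 + real N) powr (k - 2) * x powr (k - 2)"
      using x by (intro psi_dilation_bound[OF B \<open>B \<ge> 0\<close> \<open>k \<ge> 2\<close>]) auto
    also have "\<dots> \<le> B * (1 + real N) powr (k - 2) * x powr (k - 3/2)"
      using x_powr \<open>B \<ge> 0\<close> by (intro mult_left_mono) auto
    finally have psi_N: "cmod (psi k f (real N * x)) \<le> \<dots>" .
    have "cmod (\<i> powr (complex_of_real (1 - 2 * k)) * psi k f (1 / x) * of_real ((sqrt (real N) * x) powr (k - 5/2)))
        = c * cmod (psi k f (1 / x)) * sqrt (real N) powr (k - 5/2) * x powr (k - 5/2)"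
      using x by (simp add: c_def norm_mult powr_mult)
    also have "\<dots> \<le> c * (B * 2 powr (k - 2)) * sqrt (real N) powr (k - 5/2) * x powr (k - 3/2)"
      using x x_powr \<open>B \<ge> 0\<close> psi_inverse_bound[OF B \<open>B \<ge> 0\<close> \<open>k \<ge> 2\<close>, of x]
      by (intro mult_mono) (auto simp: c_def)
    finally show ?thesis using psi_N unfolding C_def distrib_right by (simp only: mult.assoc)
  qed
  then show ?thesis by blast
qed

lemma cusp_form_plus_one:
  assumes "f \<in> cusp_forms_star k N" "Im z > 0"
  shows "f (z + 1) = f z"
proof -
  have "(1, 1, 0, 1) \<in> Gamma0 N" by (simp add: Gamma0_def)
  then have "slash k f (1, 1, 0, 1) z = f z"
    using assms by (auto simp: cusp_forms_star_def uhp_def)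
  then show ?thesis by (simp add: slash_def kronecker_def eps_d_def moebius_act_def)
qed

lemma cusp_form_vanishes_at_infinity:
  assumes "f \<in> cusp_forms_star k N" "e > 0"
  shows "\<exists>Y. \<forall>z. Im z > Y \<longrightarrow> cmod (f z) < e"
proof -
  have "(1, 0, 0, 1) \<in> SL2Z" by (simp add: SL2Z_def)
  moreover have "vanishes_at_cusps k f" using assms(1) by (simp add: cusp_forms_star_def)
  ultimately show ?thesis
    unfolding vanishes_at_cusps_def using assms(2) by (fastforce simp: moebius_act_def)
qed

lemma cusp_form_exp_decay:
  assumes "f \<in> cusp_forms_star k N"
  shows "\<exists>C Y. \<forall>z. Im z > Y \<longrightarrow> cmod (f z) \<le> C * exp (- 2 * pi * Im z)"
proof (rule periodic_vanishing_exp_decay)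
  show "f holomorphic_on uhp" using assms by (simp add: cusp_forms_star_def)
qed (use assms cusp_form_plus_one cusp_form_vanishes_at_infinity in blast)+

lemma cusp_form_Fricke_imag_axis:
  assumes "f \<in> cusp_forms_star k N" "N > 0" "t > 0"
  shows "cmod (f (\<i> * of_real t))
    = (sqrt (real N) * t) powr (- k) * cmod (f (\<i> * of_real (1 / (real N * t))))"
proof -
  have "slash_W k N f (\<i> * of_real t) = f (\<i> * of_real t)"
    using assms by (auto simp: cusp_forms_star_def uhp_def)
  moreover have "- \<i> * of_real (sqrt (real N)) * (\<i> * of_real t) = of_real (sqrt (real N) * t)"
    by (simp add: algebra_simps)
  moreover have "- 1 / (of_nat N * (\<i> * of_real t)) = \<i> * of_real (1 / (real N * t))"
    using assms by (simp add: field_simps)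
  ultimately have "f (\<i> * of_real t)
      = of_real ((sqrt (real N) * t) powr (- k)) * f (\<i> * of_real (1 / (real N * t)))"
    using assms by (simp add: slash_W_def powr_of_real[symmetric])
  then show ?thesis by (simp add: norm_mult)
qed

lemma cusp_form_imag_axis_decay_at_top:
  assumes "f \<in> cusp_forms_star k N"
  shows "\<exists>T. \<forall>t\<ge>T. cmod (f (\<i> * of_real t)) * (1 + t) powr k * exp t \<le> 1"
proof -
  obtain C Y where CY: "\<And>z. Im z > Y \<Longrightarrow> cmod (f z) \<le> C * exp (- 2 * pi * Im z)"
    using cusp_form_exp_decay[OF assms] by blast
  have "cmod (f (\<i> * of_real (\<bar>Y\<bar> + 1))) \<le> C * exp (- 2 * pi * Im (\<i> * of_real (\<bar>Y\<bar> + 1)))"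
    by (rule CY) simp
  then have "0 \<le> C * exp (- 2 * pi * (\<bar>Y\<bar> + 1))"
    by (simp only: Im_i_times Re_complex_of_real) (rule order_trans[OF norm_ge_zero])
  then have "C \<ge> 0" by (simp add: zero_le_mult_iff)
  have "((\<lambda>t::real. (1 + t) powr k * exp (- t)) \<longlongrightarrow> 0) at_top"
    by real_asymp
  then have "((\<lambda>t. C * ((1 + t) powr k * exp (- t))) \<longlongrightarrow> C * 0) at_top"
    by (rule tendsto_mult_left)
  then have "\<forall>\<^sub>F t in at_top. C * ((1 + t) powr k * exp (- t)) < 1"
    by (intro order_tendstoD) auto
  moreover have "\<forall>\<^sub>F t in at_top. t > max Y 0" by (rule eventually_gt_at_top)
  ultimately have "\<forall>\<^sub>F t in at_top. cmod (f (\<i> * of_real t)) * (1 + t) powr k * exp t \<le> 1"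
  proof eventually_elim
    case (elim t)
    have "cmod (f (\<i> * of_real t)) * (1 + t) powr k * exp t
        \<le> C * exp (- 2 * pi * t) * (1 + t) powr k * exp t"
      using CY[of "\<i> * of_real t"] elim by (intro mult_right_mono) auto
    also have "\<dots> = C * (1 + t) powr k * (exp (- 2 * pi * t) * exp t)" by simp
    also have "\<dots> \<le> C * (1 + t) powr k * exp (- t)"
    proof (intro mult_left_mono)
      show "exp (- 2 * pi * t) * exp t \<le> exp (- t)"
        using elim pi_ge_two by (simp add: exp_add[symmetric] mult_right_mono)
    qed (use \<open>C \<ge> 0\<close> in auto)
    finally show ?case using elim(1) by (simp only: mult.assoc)
  qed
  then show ?thesis by (simp add: eventually_at_top_linorder)
qed

lemma cusp_form_imag_axis_bounded_at_0:
  assumes cf: "f \<in> cusp_forms_star k N" and N: "N > 0" and k: "k > 0"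
  shows "\<exists>t0>0. \<forall>t. 0 < t \<and> t \<le> t0 \<longrightarrow> cmod (f (\<i> * of_real t)) \<le> sqrt (real N) powr k"
proof -
  obtain T where T: "\<And>t. t \<ge> T \<Longrightarrow> cmod (f (\<i> * of_real t)) * (1 + t) powr k * exp t \<le> 1"
    using cusp_form_imag_axis_decay_at_top[OF cf] by blast
  define T' where "T' = max T 1"
  have "T' > 0" by (simp add: T'_def)
  have "cmod (f (\<i> * of_real t)) \<le> sqrt (real N) powr k" if t: "0 < t" "t \<le> 1 / (real N * T')" for t
  proof -
    define s where "s = 1 / (real N * t)"
    have "s > 0" using N t by (simp add: s_def)
    have "T' \<le> s"
      using N t \<open>T' > 0\<close> by (simp add: s_def field_simps)
    then have "cmod (f (\<i> * of_real s)) * (1 + s) powr k * exp s \<le> 1"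
      by (intro T) (simp add: T'_def)
    moreover have "s powr k \<le> (1 + s) powr k * exp s"
    proof -
      have "s powr k \<le> (1 + s) powr k" using \<open>s > 0\<close> k by (intro powr_mono2) auto
      also have "\<dots> \<le> (1 + s) powr k * exp s" using \<open>s > 0\<close> by simp
      finally show ?thesis .
    qed
    ultimately have "cmod (f (\<i> * of_real s)) * s powr k \<le> 1"
      by (metis mult.assoc mult_left_mono norm_ge_zero order_trans)
    then have fs: "cmod (f (\<i> * of_real s)) \<le> s powr (- k)"
      using \<open>s > 0\<close> by (simp add: powr_minus field_simps)
    have "cmod (f (\<i> * of_real t)) = (sqrt (real N) * t) powr (- k) * cmod (f (\<i> * of_real s))"
      unfolding s_def by (rule cusp_form_Fricke_imag_axis[OF cf N t(1)])
    also have "\<dots> \<le> (sqrt (real N) * t) powr (- k) * s powr (- k)"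
      using fs by (intro mult_left_mono) auto
    also have "\<dots> = (sqrt (real N) * t * s) powr (- k)"
      using t \<open>s > 0\<close> by (simp add: powr_mult)
    also have "sqrt (real N) * t * s = 1 / sqrt (real N)"
      using N t by (simp add: s_def field_simps real_sqrt_mult[symmetric])
    finally show ?thesis using N by (simp add: powr_minus powr_divide)
  qed
  then show ?thesis using N \<open>T' > 0\<close> by (intro exI[of _ "1 / (real N * T')"]) auto
qed

lemma cusp_form_imag_axis_bound:
  assumes cf: "f \<in> cusp_forms_star k N" and N: "N > 0" and k: "k > 0"
  shows "\<exists>B. \<forall>t>0. cmod (f (\<i> * of_real t)) * (1 + t) powr k * exp t \<le> B"
proof -
  obtain t0 where "t0 > 0"
    and t0: "\<And>t. 0 < t \<Longrightarrow> t \<le> t0 \<Longrightarrow> cmod (f (\<i> * of_real t)) \<le> sqrt (real N) powr k"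
    using cusp_form_imag_axis_bounded_at_0[OF assms] by blast
  obtain T where T: "\<And>t. t \<ge> T \<Longrightarrow> cmod (f (\<i> * of_real t)) * (1 + t) powr k * exp t \<le> 1"
    using cusp_form_imag_axis_decay_at_top[OF cf] by blast
  have "continuous_on uhp f"
    using cf by (intro holomorphic_on_imp_continuous_on) (simp add: cusp_forms_star_def)
  then have "continuous_on {0<..} (\<lambda>t. f (\<i> * of_real t))"
    by (rule continuous_on_compose2) (auto intro!: continuous_intros simp: uhp_def)
  then have cont: "continuous_on {0<..} (\<lambda>t. cmod (f (\<i> * of_real t)) * (1 + t) powr k * exp t)"
    by (auto intro!: continuous_intros)
  have near_0: "cmod (f (\<i> * of_real t)) * (1 + t) powr k * exp t \<le> sqrt (real N) powr k * 2 powr k * exp 1"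
    if "0 < t" "t \<le> min t0 1" for t
  proof -
    have "(1 + t) powr k \<le> 2 powr k" using that k by (intro powr_mono2) auto
    moreover have "exp t \<le> exp 1" using that by simp
    ultimately show ?thesis using t0[of t] that by (intro mult_mono) auto
  qed
  show ?thesis
    by (rule bounded_above_on_pos_reals[where a = "min t0 1", OF cont _ near_0 T]) (use \<open>t0 > 0\<close> in simp)
qed

lemma cusp_form_psi_growth:
  assumes "f \<in> cusp_forms_star k N" "N > 0" "k \<ge> 2"
  shows "\<exists>B\<ge>0. \<forall>y\<ge>0. cmod (psi k f y) \<le> B * (1 + y) powr (k - 2)"
proof -
  obtain B where B: "\<And>t. t > 0 \<Longrightarrow> cmod (f (\<i> * of_real t)) * (1 + t) powr k * exp t \<le> B"
    using cusp_form_imag_axis_bound[OF assms(1,2)] assms(3) by force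
  have "0 \<le> cmod (f (\<i> * of_real 1)) * (1 + 1) powr k * exp 1" by simp
  then have "B \<ge> 0" using B[of 1] by linarith
  with norm_psi_le[OF B assms(3)] show ?thesis by blast
qed

lemma P_poly_bound:
  assumes "k > 5/2"
  shows "\<exists>K. \<forall>x>1. cmod (P_poly k N f (\<i> * of_real x)) \<le> K * x powr (k - 3/2)"
proof -
  define m where "m = nat \<lfloor>k - 5/2\<rfloor>"
  have "\<exists>c. \<forall>z. P_poly k N f z = \<i> powr complex_of_real (k - 1) * (\<Sum>n = 0..m. c n * z ^ n)"
    unfolding P_poly_def m_def by (intro exI allI) (rule refl)
  then obtain c where P: "\<And>z. P_poly k N f z = \<i> powr complex_of_real (k - 1) * (\<Sum>n = 0..m. c n * z ^ n)"
    by blast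
  have deg: "real n \<le> k - 3/2" if "n \<le> m" for n
    using that assms by (simp add: m_def) linarith
  have "cmod (P_poly k N f (\<i> * of_real x))
      \<le> (cmod (\<i> powr complex_of_real (k - 1)) * (\<Sum>n = 0..m. cmod (c n))) * x powr (k - 3/2)"
    if "x > 1" for x
    using norm_sum_powers_le[OF deg, where z = "\<i> * of_real x" and a = c] that
    by (simp add: P norm_mult mult.assoc mult_left_mono)
  then show ?thesis by blast
qed

theorem proposition3p2:
  fixes k :: real and N :: nat and f :: "complex \<Rightarrow> complex"
  assumes "k - 1/2 \<in> \<int>" and "k > 5/2"
    and "N > 0" and "4 dvd N"
    and "f \<in> cusp_forms_star k N"
  shows "\<exists>C. \<forall>x::real. x > 1 \<longrightarrow>
     cmod (P_poly k N f (\<i> * of_real x) - psi k f (real N * x)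
           + \<i> powr (complex_of_real (1 - 2 * k)) * psi k f (1 / x)
             * of_real ((sqrt (real N) * x) powr (k - 5/2)))
       \<le> C * x powr (k - 3/2)"
proof -
  have "k \<ge> 2" using assms(2) by simp
  obtain K where K: "\<And>x. x > 1 \<Longrightarrow> cmod (P_poly k N f (\<i> * of_real x)) \<le> K * x powr (k - 3/2)"
    using P_poly_bound[OF assms(2)] by blast
  obtain B where "B \<ge> 0" and B: "\<And>y. y \<ge> 0 \<Longrightarrow> cmod (psi k f y) \<le> B * (1 + y) powr (k - 2)"
    using cusp_form_psi_growth[OF assms(5,3) \<open>k \<ge> 2\<close>] by blast
  obtain C where C: "\<And>x. x \<ge> 1 \<Longrightarrow> cmod (psi k f (real N * x))
      + cmod (\<i> powr (complex_of_real (1 - 2 * k)) * psi k f (1 / x)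
          * of_real ((sqrt (real N) * x) powr (k - 5/2))) \<le> C * x powr (k - 3/2)"
    using psi_terms_bound[OF B \<open>B \<ge> 0\<close> \<open>k \<ge> 2\<close>] by blast
  have "cmod (P_poly k N f (\<i> * of_real x) - psi k f (real N * x)
           + \<i> powr (complex_of_real (1 - 2 * k)) * psi k f (1 / x)
             * of_real ((sqrt (real N) * x) powr (k - 5/2)))
       \<le> (K + C) * x powr (k - 3/2)" (is "cmod (?P - ?\<psi>N + ?\<psi>inv) \<le> _") if "x > 1" for x
  proof -
    have "cmod (?P - ?\<psi>N + ?\<psi>inv) \<le> cmod ?P + cmod ?\<psi>N + cmod ?\<psi>inv"
      using norm_triangle_ineq[of "?P - ?\<psi>N" ?\<psi>inv] norm_triangle_ineq4[of ?P ?\<psi>N] by linarith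
    then show ?thesis using K[OF that] C[of x] that by (simp add: distrib_right)
  qed
  then show ?thesis by blast
qed

end
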